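(* Let $\eta_1,\eta_2,\dots$ be i.i.d. random variables with common distribution $G$ and let $T_n:=\eta_1+\dots+\eta_n$. Assume $\mathbb E\eta_1=0$, $\mathbb E\{\eta_1^2;\eta_1\le0\}<\infty$, and $G$ is dominated varying, i.e. $\sup_x\overline G(x/2)/\overline G(x)<\infty$. (i) If for some $\delta\in(0,1)$, $\mathbb E\{\eta_1^{1+\delta};\eta_1>0\}<\infty$, then for every $\delta'\in(0,\delta)$ there exists $c<\infty$ such that $\Pr\{T_n>x\}\le cn\overline G(x)$ for all $x>0$ and $n\le x^{1+\delta'}$. (ii) If for some $\delta>0$, $\mathbb E\{\eta_1^{2+\delta};\eta_1>0\}<\infty$, then there exists $c<\infty$ such that $\Pr\{T_n>x\}\le cn\overline G(x)$ for all $x>0$ and $n\le x^2/(c\log x)$.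
   Context: $\overline G(x):=\Pr\{\eta_1>x\}$. $\mathbb E\{X;A\}$ denotes $\mathbb E[X\mathbf 1_A]$. *)

theory Defs
  imports "HOL-Probability.Probability"
begin

definition tail :: "'a measure \<Rightarrow> ('a \<Rightarrow> real) \<Rightarrow> real \<Rightarrow> real" where
  "tail M X x = measure M {\<omega> \<in> space M. X \<omega> > x}"

end

theory Submission
  imports Defs
begin

text \<open>
  Truncate the summands at \<open>y = x / 2^m\<close>. The probability that some \<open>\<eta>\<^sub>i\<close> exceeds y is at
  most \<open>n Gbar(y) \<le> C^m n Gbar(x)\<close> by dominated variation. On the complementary event the
  exponential Chebyshev inequality with \<open>h = a ln x / x\<close> gives the bound
  \<open>x^(-a) (E exp(h min(\<eta>, y)))^n\<close>. Because \<open>E \<eta> = 0\<close>, the truncated moment generating function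
  is at most \<open>1 + h\<^sup>2 E{\<eta>\<^sup>2; \<eta> \<le> 0} + e^(h y) h^p E{\<eta>^p; \<eta> > 0}\<close> (in part (ii) the full second
  moment replaces the first expectation), and in the admissible range of n its n-th power is
  bounded (by a constant times \<open>x^(a/2)\<close> in part (ii)). Finally, dominated variation
  forces \<open>Gbar(x) \<ge> Gbar(1) / (C x^(log\<^sub>2 C))\<close>, so choosing a large compared with \<open>log\<^sub>2 C\<close>
  makes the Chebyshev term \<open>O(Gbar(x))\<close>.
\<close>

lemma exp_le_one_plus_sq_nonpos:
  fixes t :: real
  assumes "t \<le> 0"
  shows "exp t \<le> 1 + t + t\<^sup>2"
proof -
  define s where "s = - t"
  have s: "0 \<le> s" using assms by (simp add: s_def)
  have taylor: "1 + s + s\<^sup>2 / 2 \<le> exp s" using exp_lower_Taylor_quadratic[OF s] .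
  have pos: "0 < 1 + s + s\<^sup>2 / 2" using s by (simp add: add_pos_nonneg)
  have "(1 - s + s\<^sup>2) * (1 + s + s\<^sup>2 / 2) = 1 + s\<^sup>2 / 2 + s ^ 3 / 2 + s ^ 4 / 2"
    by (simp add: field_simps power2_eq_square power3_eq_cube power4_eq_xxxx)
  also have "\<dots> \<ge> 1" using s by simp
  finally have "1 / (1 + s + s\<^sup>2 / 2) \<le> 1 - s + s\<^sup>2" using pos by (simp add: field_simps)
  moreover have "exp t \<le> 1 / (1 + s + s\<^sup>2 / 2)"
    using taylor pos by (simp add: s_def exp_minus field_simps)
  ultimately show ?thesis by (simp add: s_def)
qed

lemma exp_le_one_plus_powr:
  fixes t T p :: real
  assumes "0 \<le> t" "t \<le> T" "1 \<le> p" "p \<le> 2"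
  shows "exp t \<le> 1 + t + exp T * t powr p"
proof (cases "t \<le> 1")
  case True
  have "t\<^sup>2 \<le> t powr p"
  proof (cases "t = 0")
    case False
    then have "t powr 2 \<le> t powr p" using True assms by (intro powr_mono') auto
    then show ?thesis using assms by (simp add: powr_numeral)
  qed simp
  also have "t powr p \<le> exp T * t powr p" using assms by (simp add: mult_le_cancel_right1)
  finally show ?thesis using exp_bound[OF assms(1) True] by linarith
next
  case False
  then have "exp T \<le> exp T * t powr p" using assms by (simp add: ge_one_powr_ge_zero)
  moreover have "exp t \<le> exp T" using assms by simp
  ultimately show ?thesis using False by linarith
qed

lemma exp_le_one_plus_sq_plus_powr:
  fixes t T p :: real
  assumes "0 \<le> t" "t \<le> T" "0 \<le> p"
  shows "exp t \<le> 1 + t + t\<^sup>2 + exp T * t powr p"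
proof (cases "t \<le> 1")
  case True
  then show ?thesis using exp_bound[OF assms(1) True] by (simp add: add_increasing2)
next
  case False
  then have "exp T \<le> exp T * t powr p" using assms by (simp add: ge_one_powr_ge_zero)
  moreover have "exp t \<le> exp T" using assms by simp
  ultimately show ?thesis using False zero_le_power2[of t] by linarith
qed

lemma exp_mult_min_le_neg_sq_pos_powr:
  fixes h y p u :: real
  assumes "0 \<le> h" "0 < y" "1 \<le> p" "p \<le> 2"
  shows "exp (h * min u y) \<le> 1 + h * min u y + (h\<^sup>2 * (u\<^sup>2 * indicator {..0} u)
    + exp (h * y) * h powr p * (u powr p * indicator {0<..} u))"
proof (cases "u \<le> 0")
  case True
  then show ?thesis
    using exp_le_one_plus_sq_nonpos[of "h * u"] assms
    by (simp add: min_absorb1 mult_nonneg_nonpos power_mult_distrib)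
next
  case False
  define m where "m = min u y"
  have m: "0 < m" "m \<le> y" "m \<le> u" using False assms by (auto simp: m_def)
  have "exp (h * m) \<le> 1 + h * m + exp (h * y) * (h * m) powr p"
    using m assms by (intro exp_le_one_plus_powr) (auto simp: mult_left_mono)
  also have "(h * m) powr p \<le> h powr p * u powr p"
    using m assms by (simp add: powr_mult mult_left_mono powr_mono2)
  finally show ?thesis using False by (simp add: m_def mult_left_mono mult.assoc)
qed

lemma exp_mult_min_le_sq_pos_powr:
  fixes h y p u :: real
  assumes "0 \<le> h" "0 < y" "0 \<le> p"
  shows "exp (h * min u y) \<le> 1 + h * min u y + (h\<^sup>2 * u\<^sup>2
    + exp (h * y) * h powr p * (u powr p * indicator {0<..} u))"
proof (cases "u \<le> 0")
  case True
  then show ?thesis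
    using exp_le_one_plus_sq_nonpos[of "h * u"] assms
    by (simp add: min_absorb1 mult_nonneg_nonpos power_mult_distrib)
next
  case False
  define m where "m = min u y"
  have m: "0 < m" "m \<le> y" "m \<le> u" using False assms by (auto simp: m_def)
  have "exp (h * m) \<le> 1 + h * m + (h * m)\<^sup>2 + exp (h * y) * (h * m) powr p"
    using m assms by (intro exp_le_one_plus_sq_plus_powr) (auto simp: mult_left_mono)
  also have "(h * m) powr p \<le> h powr p * u powr p"
    using m assms by (simp add: powr_mult mult_left_mono powr_mono2)
  also have "(h * m)\<^sup>2 \<le> h\<^sup>2 * u\<^sup>2"
    using m assms by (simp add: power_mult_distrib mult_left_mono power_mono)
  finally show ?thesis using False by (simp add: m_def mult_left_mono mult.assoc)
qed

lemma ln_powr_le_powr: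
  fixes x q e :: real
  assumes "1 \<le> x" "0 < q" "0 < e"
  shows "ln x powr q \<le> (q / e) powr q * x powr e"
proof -
  have "ln x \<le> q / e * x powr (e / q)"
    using ln_powr_bound[of x "e / q"] assms by (simp add: field_simps)
  then have "ln x powr q \<le> (q / e * x powr (e / q)) powr q" using assms by (intro powr_mono2) auto
  also have "\<dots> = (q / e) powr q * x powr e" using assms by (subst powr_mult) (auto simp: powr_powr)
  finally show ?thesis .
qed

lemma mult_sq_ln_div_le_of_le_powr:
  fixes x a s N :: real
  assumes x: "1 \<le> x" and N: "N \<le> x powr (1 + s)" and "s < 1"
  shows "N * (a * ln x / x)\<^sup>2 \<le> a\<^sup>2 * (2 / (1 - s))\<^sup>2"
proof -
  have "N * (a * ln x / x)\<^sup>2 \<le> x powr (1 + s) * (a * ln x / x)\<^sup>2"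
    using N by (intro mult_right_mono) auto
  also have "\<dots> = a\<^sup>2 * (ln x powr 2 * x powr (s - 1))"
    using x by (simp add: powr_numeral power_divide power_mult_distrib powr_diff powr_add
        power2_eq_square field_simps)
  also have "\<dots> \<le> a\<^sup>2 * ((2 / (1 - s)) powr 2 * x powr (1 - s) * x powr (s - 1))"
    using ln_powr_le_powr[OF x, of 2 "1 - s"] \<open>s < 1\<close> by (intro mult_left_mono mult_right_mono) auto
  also have "\<dots> = a\<^sup>2 * (2 / (1 - s))\<^sup>2"
    using x \<open>s < 1\<close> by (simp add: powr_add[symmetric] flip: powr_numeral)
  finally show ?thesis .
qed

lemma mult_powr_ln_div_le_of_le_powr:
  fixes x a s d N :: real
  assumes x: "1 \<le> x" and N: "N \<le> x powr (1 + s)" and "s < d" "0 < a" "0 \<le> d"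
  shows "N * x powr ((d - s) / 2) * (a * ln x / x) powr (1 + d)
    \<le> a powr (1 + d) * ((1 + d) / ((d - s) / 2)) powr (1 + d)"
proof -
  define e where "e = (d - s) / 2"
  have e: "0 < e" using \<open>s < d\<close> by (simp add: e_def)
  have "N * x powr e * (a * ln x / x) powr (1 + d)
      \<le> x powr (1 + s) * x powr e * (a * ln x / x) powr (1 + d)"
    using N by (intro mult_right_mono) auto
  also have "\<dots> = a powr (1 + d) * (ln x powr (1 + d) * x powr (- e))"
    using x \<open>0 < a\<close>
    by (simp add: powr_divide powr_mult e_def powr_add[symmetric] powr_diff[symmetric] field_simps)
  also have "\<dots> \<le> a powr (1 + d) * (((1 + d) / e) powr (1 + d) * x powr e * x powr (- e))"
    using ln_powr_le_powr[OF x, of "1 + d" e] e \<open>0 \<le> d\<close>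
    by (intro mult_left_mono mult_right_mono) auto
  also have "\<dots> = a powr (1 + d) * ((1 + d) / e) powr (1 + d)"
    using x by (simp add: powr_add[symmetric])
  finally show ?thesis by (simp add: e_def)
qed

lemma mult_sq_ln_div_le_of_le_sq_div_ln:
  fixes x a c N :: real
  assumes x: "1 < x" and N: "N \<le> x\<^sup>2 / (c * ln x)" and "0 < c"
  shows "N * (a * ln x / x)\<^sup>2 \<le> a\<^sup>2 * ln x / c"
proof -
  have "N * (a * ln x / x)\<^sup>2 \<le> x\<^sup>2 / (c * ln x) * (a * ln x / x)\<^sup>2"
    using N by (intro mult_right_mono) auto
  also have "\<dots> = a\<^sup>2 * ln x / c"
    using x \<open>0 < c\<close> by (simp add: power_divide power_mult_distrib power2_eq_square field_simps)
  finally show ?thesis .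
qed

lemma mult_powr_ln_div_le_of_le_sq_div_ln:
  fixes x a c d N :: real
  assumes x: "1 < x" and N: "N \<le> x\<^sup>2 / (c * ln x)" and "1 \<le> c" "0 < a" "0 < d"
  shows "N * x powr (d / 2) * (a * ln x / x) powr (2 + d)
    \<le> a powr (2 + d) * ((1 + d) / (d / 2)) powr (1 + d)"
proof -
  define e where "e = d / 2"
  have e: "0 < e" using \<open>0 < d\<close> by (simp add: e_def)
  have "N \<le> x powr 2 / ln x"
    using N x \<open>1 \<le> c\<close> by (auto simp: powr_numeral intro!: order_trans[OF N] divide_left_mono)
  then have "N * x powr e * (a * ln x / x) powr (2 + d)
      \<le> x powr 2 / ln x * x powr e * (a * ln x / x) powr (2 + d)"
    by (intro mult_right_mono) auto
  also have "\<dots> = a powr (2 + d) * (ln x powr (1 + d) * x powr (- e))"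
  proof -
    have "ln x powr (2 + d) = ln x * ln x powr (1 + d)"
      using powr_add[of "ln x" 1 "1 + d"] x by (simp add: add.assoc)
    moreover have "x powr 2 * x powr e / x powr (2 + d) = x powr (- e)"
      by (simp add: e_def powr_add[symmetric] powr_diff[symmetric] del: powr_numeral)
    ultimately show ?thesis
      using x \<open>0 < a\<close> by (simp add: powr_divide powr_mult field_simps del: powr_numeral)
  qed
  also have "\<dots> \<le> a powr (2 + d) * (((1 + d) / e) powr (1 + d) * x powr e * x powr (- e))"
    using ln_powr_le_powr[of x "1 + d" e] e x \<open>0 < d\<close>
    by (intro mult_left_mono mult_right_mono) auto
  also have "\<dots> = a powr (2 + d) * ((1 + d) / e) powr (1 + d)"
    using x by (simp add: powr_add[symmetric])
  finally show ?thesis by (simp add: e_def)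
qed

context prob_space
begin

lemma tail_nonneg: "0 \<le> tail M X t"
  unfolding tail_def by simp

lemma tail_antimono:
  assumes "X \<in> borel_measurable M" "s \<le> t"
  shows "tail M X t \<le> tail M X s"
  unfolding tail_def using assms by (intro finite_measure_mono) auto

lemma tail_div_pow2_le:
  assumes half: "\<And>x. tail M X (x / 2) \<le> C * tail M X x" and "0 \<le> C"
  shows "tail M X (x / 2 ^ m) \<le> C ^ m * tail M X x"
proof (induction m)
  case (Suc m)
  have "tail M X (x / 2 ^ Suc m) = tail M X (x / 2 ^ m / 2)" by (simp add: field_simps)
  also have "\<dots> \<le> C * tail M X (x / 2 ^ m)" by (rule half)
  also have "\<dots> \<le> C * (C ^ m * tail M X x)" using Suc \<open>0 \<le> C\<close> by (intro mult_left_mono)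
  finally show ?case by simp
qed simp

lemma tail_one_le_powr_mult_tail:
  assumes "X \<in> borel_measurable M" and half: "\<And>x. tail M X (x / 2) \<le> C * tail M X x"
    and "1 \<le> C" "1 \<le> x"
  shows "tail M X 1 \<le> C * x powr log 2 C * tail M X x"
proof -
  define k where "k = nat \<lceil>log 2 x\<rceil>"
  have k: "log 2 x \<le> k" "k < log 2 x + 1" using \<open>1 \<le> x\<close> by (auto simp: k_def) linarith
  have "x = 2 powr log 2 x" using \<open>1 \<le> x\<close> by simp
  also have "\<dots> \<le> 2 ^ k" using k by (simp add: powr_realpow[symmetric])
  finally have "tail M X 1 \<le> tail M X (x / 2 ^ k)"
    using assms by (intro tail_antimono) (auto simp: field_simps)
  also have "\<dots> \<le> C ^ k * tail M X x" using half \<open>1 \<le> C\<close> by (intro tail_div_pow2_le) auto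
  also have "C ^ k \<le> C powr (log 2 x + 1)"
    using k \<open>1 \<le> C\<close> by (auto simp: powr_realpow[symmetric] intro!: powr_mono)
  also have "C powr (log 2 x + 1) = C * C powr log 2 x"
    using assms by (simp add: powr_add)
  also have "C powr log 2 x = x powr log 2 C"
    using assms by (simp add: powr_def log_def)
  finally show ?thesis using tail_nonneg by (simp add: mult_right_mono)
qed

lemma tail_eq_0_if_tail_one_eq_0:
  assumes "X \<in> borel_measurable M" and half: "\<And>x. tail M X (x / 2) \<le> C * tail M X x"
    and "0 \<le> C" "tail M X 1 = 0" "0 < t"
  shows "tail M X t = 0"
proof -
  obtain m :: nat where "1 / t < 2 ^ m" using real_arch_pow[of 2 "1 / t"] by auto
  then have "tail M X t \<le> tail M X (1 / 2 ^ m)"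
    using assms by (intro tail_antimono) (auto simp: field_simps)
  also have "\<dots> \<le> C ^ m * tail M X 1" using half \<open>0 \<le> C\<close> by (rule tail_div_pow2_le)
  finally show ?thesis using \<open>tail M X 1 = 0\<close> tail_nonneg by (simp add: order_antisym)
qed

lemma expectation_exp_mult_min_le:
  fixes X g :: "'a \<Rightarrow> real"
  assumes X: "integrable M X" "expectation X \<le> 0" and g: "integrable M g" and "0 \<le> h"
    and bound: "\<And>\<omega>. exp (h * min (X \<omega>) y) \<le> 1 + h * min (X \<omega>) y + g \<omega>"
  shows "expectation (\<lambda>\<omega>. exp (h * min (X \<omega>) y)) \<le> 1 + expectation g"
proof -
  have [measurable]: "X \<in> borel_measurable M" using X by auto
  have min_integrable: "integrable M (\<lambda>\<omega>. min (X \<omega>) y)"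
    using X by (intro integrable_min) auto
  have "integrable M (\<lambda>\<omega>. exp (h * min (X \<omega>) y))"
    using \<open>0 \<le> h\<close>
    by (intro integrable_const_bound[where B = "exp (h * y)"]) (auto simp: mult_left_mono)
  then have "expectation (\<lambda>\<omega>. exp (h * min (X \<omega>) y))
      \<le> expectation (\<lambda>\<omega>. 1 + h * min (X \<omega>) y + g \<omega>)"
    using bound min_integrable g by (intro integral_mono) auto
  also have "\<dots> = 1 + h * expectation (\<lambda>\<omega>. min (X \<omega>) y) + expectation g"
    using min_integrable g by (simp add: prob_space)
  also have "\<dots> \<le> 1 + expectation g"
  proof -
    have "expectation (\<lambda>\<omega>. min (X \<omega>) y) \<le> expectation X"
      using min_integrable X by (intro integral_mono) auto
    then show ?thesis using X \<open>0 \<le> h\<close> by (simp add: mult_nonneg_nonpos)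
  qed
  finally show ?thesis .
qed

lemma expectation_exp_mult_min_le_neg_sq_pos_powr:
  fixes X :: "'a \<Rightarrow> real"
  assumes "integrable M X" "expectation X \<le> 0"
    and neg: "integrable M (\<lambda>\<omega>. (X \<omega>)\<^sup>2 * indicator {..0} (X \<omega>))"
    and pos: "integrable M (\<lambda>\<omega>. X \<omega> powr p * indicator {0<..} (X \<omega>))"
    and "0 \<le> h" "0 < y" "1 \<le> p" "p \<le> 2"
  shows "expectation (\<lambda>\<omega>. exp (h * min (X \<omega>) y))
    \<le> 1 + h\<^sup>2 * expectation (\<lambda>\<omega>. (X \<omega>)\<^sup>2 * indicator {..0} (X \<omega>))
      + exp (h * y) * h powr p * expectation (\<lambda>\<omega>. X \<omega> powr p * indicator {0<..} (X \<omega>))"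
proof -
  have "expectation (\<lambda>\<omega>. exp (h * min (X \<omega>) y))
      \<le> 1 + expectation (\<lambda>\<omega>. h\<^sup>2 * ((X \<omega>)\<^sup>2 * indicator {..0} (X \<omega>))
        + exp (h * y) * h powr p * (X \<omega> powr p * indicator {0<..} (X \<omega>)))"
    using assms by (intro expectation_exp_mult_min_le exp_mult_min_le_neg_sq_pos_powr) auto
  then show ?thesis using neg pos by (simp add: add.assoc)
qed

lemma expectation_exp_mult_min_le_sq_pos_powr:
  fixes X :: "'a \<Rightarrow> real"
  assumes "integrable M X" "expectation X \<le> 0"
    and sq: "integrable M (\<lambda>\<omega>. (X \<omega>)\<^sup>2)"
    and pos: "integrable M (\<lambda>\<omega>. X \<omega> powr p * indicator {0<..} (X \<omega>))"
    and "0 \<le> h" "0 < y" "0 \<le> p"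
  shows "expectation (\<lambda>\<omega>. exp (h * min (X \<omega>) y))
    \<le> 1 + h\<^sup>2 * expectation (\<lambda>\<omega>. (X \<omega>)\<^sup>2)
      + exp (h * y) * h powr p * expectation (\<lambda>\<omega>. X \<omega> powr p * indicator {0<..} (X \<omega>))"
proof -
  have "expectation (\<lambda>\<omega>. exp (h * min (X \<omega>) y))
      \<le> 1 + expectation (\<lambda>\<omega>. h\<^sup>2 * (X \<omega>)\<^sup>2
        + exp (h * y) * h powr p * (X \<omega> powr p * indicator {0<..} (X \<omega>)))"
    using assms by (intro expectation_exp_mult_min_le exp_mult_min_le_sq_pos_powr) auto
  then show ?thesis using sq pos by (simp add: add.assoc)
qed

lemma integrable_power2_of_moments:
  fixes X :: "'a \<Rightarrow> real"
  assumes [measurable]: "X \<in> borel_measurable M"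
    and neg: "integrable M (\<lambda>\<omega>. (X \<omega>)\<^sup>2 * indicator {..0} (X \<omega>))"
    and pos: "integrable M (\<lambda>\<omega>. X \<omega> powr p * indicator {0<..} (X \<omega>))" and "2 \<le> p"
  shows "integrable M (\<lambda>\<omega>. (X \<omega>)\<^sup>2)"
proof (rule Bochner_Integration.integrable_bound)
  show "integrable M
      (\<lambda>\<omega>. (X \<omega>)\<^sup>2 * indicator {..0} (X \<omega>) + 1 + X \<omega> powr p * indicator {0<..} (X \<omega>))"
    using neg pos by auto
  have "u\<^sup>2 \<le> u\<^sup>2 * indicator {..0} u + 1 + u powr p * indicator {0<..} u" for u :: real
  proof -
    consider "u \<le> 0" | "0 < u" "u \<le> 1" | "1 < u" by linarith
    then show ?thesis
    proof cases
      case 2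
      then have "u\<^sup>2 \<le> 1" by (simp add: power_le_one)
      then show ?thesis using 2 by (simp add: add_increasing2)
    next
      case 3
      then have "u powr 2 \<le> u powr p" using \<open>2 \<le> p\<close> by (intro powr_mono) auto
      then show ?thesis using 3 by (simp add: powr_numeral)
    qed simp
  qed
  then show "AE \<omega> in M. norm ((X \<omega>)\<^sup>2)
      \<le> norm ((X \<omega>)\<^sup>2 * indicator {..0} (X \<omega>) + 1 + X \<omega> powr p * indicator {0<..} (X \<omega>))"
    by (intro AE_I2) (simp add: indicator_def)
qed measurable

end

locale iid_sequence = prob_space +
  fixes \<eta> :: "nat \<Rightarrow> 'a \<Rightarrow> real"
  assumes random_variable_eta [measurable]: "\<And>i. \<eta> i \<in> borel_measurable M"
    and indep_vars_eta: "indep_vars (\<lambda>_. borel) \<eta> UNIV"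
    and distr_eta: "\<And>i. distr M borel (\<eta> i) = distr M borel (\<eta> 0)"
begin

lemma measure_eta_gt: "measure M {\<omega> \<in> space M. y < \<eta> i \<omega>} = tail M (\<eta> 0) y"
proof -
  have distr: "measure M {\<omega> \<in> space M. y < \<eta> j \<omega>} = measure (distr M borel (\<eta> j)) {y<..}" for j
    by (simp add: measure_distr random_variable_eta vimage_def Int_def conj_commute)
  show ?thesis
    unfolding tail_def distr distr_eta[of i] ..
qed

lemma expectation_comp_eta:
  fixes f :: "real \<Rightarrow> real"
  assumes "f \<in> borel_measurable borel"
  shows "expectation (\<lambda>\<omega>. f (\<eta> i \<omega>)) = expectation (\<lambda>\<omega>. f (\<eta> 0 \<omega>))"
proof -
  have "expectation (\<lambda>\<omega>. f (\<eta> i \<omega>)) = integral\<^sup>L (distr M borel (\<eta> i)) f"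
    using assms by (intro integral_distr[symmetric]) auto
  also have "\<dots> = expectation (\<lambda>\<omega>. f (\<eta> 0 \<omega>))"
    unfolding distr_eta[of i] using assms by (intro integral_distr) auto
  finally show ?thesis .
qed

lemma measure_sum_gt_le_truncated:
  "measure M {\<omega> \<in> space M. x < (\<Sum>i<n. \<eta> i \<omega>)}
     \<le> real n * tail M (\<eta> 0) y
       + measure M {\<omega> \<in> space M. x < (\<Sum>i<n. \<eta> i \<omega>) \<and> (\<forall>i<n. \<eta> i \<omega> \<le> y)}"
proof -
  let ?A = "{\<omega> \<in> space M. x < (\<Sum>i<n. \<eta> i \<omega>) \<and> (\<forall>i<n. \<eta> i \<omega> \<le> y)}"
  let ?B = "\<Union>i<n. {\<omega> \<in> space M. y < \<eta> i \<omega>}"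
  have "measure M {\<omega> \<in> space M. x < (\<Sum>i<n. \<eta> i \<omega>)} \<le> measure M (?A \<union> ?B)"
    by (intro finite_measure_mono) (auto simp: not_le)
  also have "\<dots> \<le> measure M ?A + measure M ?B"
    by (intro measure_Un_le) auto
  also have "measure M ?B \<le> (\<Sum>i<n. measure M {\<omega> \<in> space M. y < \<eta> i \<omega>})"
    by (intro finite_measure_subadditive_finite) auto
  also have "\<dots> = real n * tail M (\<eta> 0) y"
    by (simp add: measure_eta_gt)
  finally show ?thesis by simp
qed

lemma measure_sum_gt_le_n_tail_div:
  assumes "1 \<le> n"
  shows "measure M {\<omega> \<in> space M. x < (\<Sum>i<n. \<eta> i \<omega>)} \<le> real n * tail M (\<eta> 0) (x / n)"
proof -
  have "(\<Sum>i<n. \<eta> i \<omega>) \<le> x" if "\<forall>i<n. \<eta> i \<omega> \<le> x / n" for \<omega>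
    using sum_bounded_above[of "{..<n}" "\<lambda>i. \<eta> i \<omega>" "x / n"] that assms by auto
  then have "{\<omega> \<in> space M. x < (\<Sum>i<n. \<eta> i \<omega>) \<and> (\<forall>i<n. \<eta> i \<omega> \<le> x / n)} = {}"
    by force
  then show ?thesis using measure_sum_gt_le_truncated[of x n "x / n"] by (simp only:) simp
qed

lemma measure_truncated_sum_gt_le:
  assumes "0 \<le> h"
  shows "measure M {\<omega> \<in> space M. x < (\<Sum>i<n. \<eta> i \<omega>) \<and> (\<forall>i<n. \<eta> i \<omega> \<le> y)}
     \<le> exp (- h * x) * expectation (\<lambda>\<omega>. exp (h * min (\<eta> 0 \<omega>) y)) ^ n"
proof -
  let ?A = "{\<omega> \<in> space M. x < (\<Sum>i<n. \<eta> i \<omega>) \<and> (\<forall>i<n. \<eta> i \<omega> \<le> y)}"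
  define Z where "Z i \<omega> = exp (h * min (\<eta> i \<omega>) y)" for i \<omega>
  have Z_measurable [measurable]: "Z i \<in> borel_measurable M" for i
    unfolding Z_def by measurable
  have integrable_Z: "integrable M (Z i)" for i
    using \<open>0 \<le> h\<close> by (intro integrable_const_bound[where B = "exp (h * y)"])
      (auto simp: Z_def mult_left_mono)
  have indep_Z: "indep_vars (\<lambda>_. borel) Z {..<n}"
    unfolding Z_def
    by (rule indep_vars_subset[OF indep_vars_compose2[OF indep_vars_eta,
          of "\<lambda>i v. exp (h * min v y)"]]) auto
  have chernoff: "indicator ?A \<omega> \<le> exp (- h * x) * (\<Prod>i<n. Z i \<omega>)" for \<omega>
  proof (cases "\<omega> \<in> ?A")
    case True
    then have "(\<Sum>i<n. min (\<eta> i \<omega>) y) = (\<Sum>i<n. \<eta> i \<omega>)" by (intro sum.cong) auto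
    moreover have "(\<Prod>i<n. Z i \<omega>) = exp (h * (\<Sum>i<n. min (\<eta> i \<omega>) y))"
      by (simp add: Z_def exp_sum sum_distrib_left)
    ultimately have "exp (- h * x) * (\<Prod>i<n. Z i \<omega>) = exp (h * ((\<Sum>i<n. \<eta> i \<omega>) - x))"
      by (simp add: exp_add[symmetric] algebra_simps)
    then show ?thesis using True \<open>0 \<le> h\<close> by simp
  qed (simp add: Z_def prod_nonneg)
  have "measure M ?A = expectation (indicator ?A)" by simp
  also have "\<dots> \<le> expectation (\<lambda>\<omega>. exp (- h * x) * (\<Prod>i<n. Z i \<omega>))"
    using chernoff
    by (intro integral_mono integrable_mult_right indep_vars_integrable[OF _ indep_Z] integrable_Z)
      (auto simp: less_top[symmetric])
  also have "\<dots> = exp (- h * x) * (\<Prod>i<n. expectation (Z i))"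
    by (simp add: indep_vars_lebesgue_integral[OF _ indep_Z integrable_Z])
  also have "\<dots> = exp (- h * x) * expectation (Z 0) ^ n"
  proof -
    have "(\<lambda>v. exp (h * min v y)) \<in> borel_measurable borel" by measurable
    then have "expectation (Z i) = expectation (Z 0)" for i
      unfolding Z_def by (rule expectation_comp_eta)
    then have "(\<Prod>i<n. expectation (Z i)) = (\<Prod>i<n. expectation (Z 0))"
      by (intro prod.cong refl)
    then show ?thesis by simp
  qed
  finally show ?thesis unfolding Z_def .
qed

lemma measure_sum_gt_le_mgf:
  assumes "0 \<le> h" "0 \<le> v" "expectation (\<lambda>\<omega>. exp (h * min (\<eta> 0 \<omega>) y)) \<le> 1 + v"
  shows "measure M {\<omega> \<in> space M. x < (\<Sum>i<n. \<eta> i \<omega>)}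
     \<le> real n * tail M (\<eta> 0) y + exp (real n * v - h * x)"
proof -
  have "expectation (\<lambda>\<omega>. exp (h * min (\<eta> 0 \<omega>) y)) ^ n \<le> exp v ^ n"
    using assms by (intro power_mono) (auto intro: order_trans[OF _ exp_ge_add_one_self])
  then have "exp (- h * x) * expectation (\<lambda>\<omega>. exp (h * min (\<eta> 0 \<omega>) y)) ^ n
      \<le> exp (real n * v - h * x)"
    by (simp add: exp_of_nat_mult[symmetric] exp_diff exp_minus field_simps)
  then show ?thesis
    using measure_sum_gt_le_truncated[of x n y] measure_truncated_sum_gt_le[OF \<open>0 \<le> h\<close>, of x n y]
    by linarith
qed

end

locale dominated_varying_iid = iid_sequence +
  fixes C :: real
  assumes one_le_C: "1 \<le> C"
    and tail_half_le: "\<And>x. tail M (\<eta> 0) (x / 2) \<le> C * tail M (\<eta> 0) x"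
begin

lemma measure_sum_gt_le_const_mult_tail:
  assumes "1 \<le> x" "1 \<le> n" "0 \<le> h" "0 \<le> v"
    and mgf: "expectation (\<lambda>\<omega>. exp (h * min (\<eta> 0 \<omega>) (x / 2 ^ m))) \<le> 1 + v"
    and exponent: "real n * v - h * x \<le> K - log 2 C * ln x"
  shows "measure M {\<omega> \<in> space M. x < (\<Sum>i<n. \<eta> i \<omega>)}
    \<le> (C ^ m + exp K * C / tail M (\<eta> 0) 1) * real n * tail M (\<eta> 0) x"
proof (cases "tail M (\<eta> 0) 1 = 0")
  case True
  \<comment> \<open>The constant then divides by zero, which is harmless: the probability itself vanishes.\<close>
  have "0 < x / n" using \<open>1 \<le> x\<close> \<open>1 \<le> n\<close> by simp
  then have "tail M (\<eta> 0) (x / n) = 0"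
    using tail_eq_0_if_tail_one_eq_0[OF random_variable_eta tail_half_le _ True] one_le_C by simp
  then have "measure M {\<omega> \<in> space M. x < (\<Sum>i<n. \<eta> i \<omega>)} = 0"
    using measure_sum_gt_le_n_tail_div[OF \<open>1 \<le> n\<close>, of x] by (simp add: measure_le_0_iff)
  then show ?thesis using True one_le_C by (simp add: tail_nonneg)
next
  case False
  let ?G = "tail M (\<eta> 0)"
  have G1: "0 < ?G 1" using False tail_nonneg[of "\<eta> 0" 1] by linarith
  have "exp (real n * v - h * x) \<le> exp K * x powr (- log 2 C)"
    using exponent \<open>1 \<le> x\<close> by (simp add: powr_def exp_add[symmetric])
  also have "x powr (- log 2 C) \<le> C * ?G x / ?G 1"
    using tail_one_le_powr_mult_tail[OF random_variable_eta tail_half_le one_le_C \<open>1 \<le> x\<close>] G1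
      \<open>1 \<le> x\<close> by (simp add: powr_minus field_simps)
  also have "exp K * (C * ?G x / ?G 1) = 1 * (exp K * C / ?G 1 * ?G x)" by simp
  also have "\<dots> \<le> real n * (exp K * C / ?G 1 * ?G x)"
    using \<open>1 \<le> n\<close> G1 one_le_C tail_nonneg by (intro mult_right_mono) auto
  finally have big: "exp (real n * v - h * x) \<le> real n * (exp K * C / ?G 1 * ?G x)"
    by (simp add: mult_left_mono)
  have small: "?G (x / 2 ^ m) \<le> C ^ m * ?G x"
    using one_le_C by (intro tail_div_pow2_le[OF tail_half_le]) auto
  have "measure M {\<omega> \<in> space M. x < (\<Sum>i<n. \<eta> i \<omega>)}
      \<le> real n * ?G (x / 2 ^ m) + exp (real n * v - h * x)"
    using \<open>0 \<le> h\<close> \<open>0 \<le> v\<close> mgf by (rule measure_sum_gt_le_mgf)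
  also have "\<dots> \<le> real n * (C ^ m * ?G x) + real n * (exp K * C / ?G 1 * ?G x)"
    using small big by (intro add_mono mult_left_mono) auto
  finally show ?thesis by (simp add: algebra_simps)
qed

lemma measure_sum_gt_le_n_tail_moment_1_plus:
  assumes mean: "integrable M (\<eta> 0)" "expectation (\<eta> 0) = 0"
    and neg: "integrable M (\<lambda>\<omega>. (\<eta> 0 \<omega>)\<^sup>2 * indicator {..0} (\<eta> 0 \<omega>))"
    and \<delta>: "0 < \<delta>'" "\<delta>' < \<delta>" "\<delta> < 1"
    and pos: "integrable M (\<lambda>\<omega>. \<eta> 0 \<omega> powr (1 + \<delta>) * indicator {0<..} (\<eta> 0 \<omega>))"
  shows "\<exists>c. \<forall>x > 0. \<forall>n::nat. 1 \<le> n \<and> real n \<le> x powr (1 + \<delta>') \<longrightarrow>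
    measure M {\<omega> \<in> space M. (\<Sum>i<n. \<eta> i \<omega>) > x} \<le> c * real n * tail M (\<eta> 0) x"
proof -
  define A where "A = expectation (\<lambda>\<omega>. (\<eta> 0 \<omega>)\<^sup>2 * indicator {..0} (\<eta> 0 \<omega>))"
  define B where "B = expectation (\<lambda>\<omega>. \<eta> 0 \<omega> powr (1 + \<delta>) * indicator {0<..} (\<eta> 0 \<omega>))"
  have "0 \<le> A" "0 \<le> B" unfolding A_def B_def by (auto intro!: integral_nonneg_AE)
  define a where "a = log 2 C + 1"
  define \<epsilon> where "\<epsilon> = (\<delta> - \<delta>') / 2"
  have "0 < a" "0 < \<epsilon>" using one_le_C \<delta> by (auto simp: a_def \<epsilon>_def add_nonneg_pos)
  obtain m :: nat where m: "a / \<epsilon> < 2 ^ m" using real_arch_pow[of 2 "a / \<epsilon>"] by auto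
  define K where
    "K = A * (a\<^sup>2 * (2 / (1 - \<delta>'))\<^sup>2) + B * (a powr (1 + \<delta>) * ((1 + \<delta>) / \<epsilon>) powr (1 + \<delta>))"
  have "measure M {\<omega> \<in> space M. x < (\<Sum>i<n. \<eta> i \<omega>)}
      \<le> (C ^ m + exp K * C / tail M (\<eta> 0) 1) * real n * tail M (\<eta> 0) x"
    if "0 < x" "1 \<le> n" and n: "real n \<le> x powr (1 + \<delta>')" for x n
  proof -
    have "1 \<le> x"
    proof (rule ccontr)
      assume "\<not> 1 \<le> x"
      then have "x powr (1 + \<delta>') < 1"
        using powr_less_mono2[of "1 + \<delta>'" x 1] \<open>0 < x\<close> \<delta> by simp
      then show False using that by linarith
    qed
    define h where "h = a * ln x / x"
    define v where "v = h\<^sup>2 * A + x powr \<epsilon> * h powr (1 + \<delta>) * B"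
    have "0 \<le> h" "0 \<le> v"
      using \<open>1 \<le> x\<close> \<open>0 < a\<close> \<open>0 \<le> A\<close> \<open>0 \<le> B\<close> by (simp_all add: h_def v_def)
    have "h * (x / 2 ^ m) = a / 2 ^ m * ln x" using \<open>0 < x\<close> by (simp add: h_def)
    also have "\<dots> \<le> \<epsilon> * ln x"
      using m \<open>1 \<le> x\<close> \<open>0 < \<epsilon>\<close> by (intro mult_right_mono) (auto simp: field_simps)
    finally have "exp (h * (x / 2 ^ m)) \<le> x powr \<epsilon>"
      using \<open>0 < x\<close> by (simp add: powr_def mult.commute)
    have "expectation (\<lambda>\<omega>. exp (h * min (\<eta> 0 \<omega>) (x / 2 ^ m)))
        \<le> 1 + h\<^sup>2 * A + exp (h * (x / 2 ^ m)) * h powr (1 + \<delta>) * B"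
      unfolding A_def B_def using \<open>0 < x\<close> \<delta>
      by (intro expectation_exp_mult_min_le_neg_sq_pos_powr[OF mean(1) eq_refl[OF mean(2)] neg pos
            \<open>0 \<le> h\<close>]) auto
    also have "\<dots> \<le> 1 + v"
      using \<open>exp (h * (x / 2 ^ m)) \<le> x powr \<epsilon>\<close> \<open>0 \<le> B\<close> by (simp add: v_def mult_right_mono)
    finally have mgf: "expectation (\<lambda>\<omega>. exp (h * min (\<eta> 0 \<omega>) (x / 2 ^ m))) \<le> 1 + v" .
    have "real n * v = A * (real n * h\<^sup>2) + B * (real n * x powr \<epsilon> * h powr (1 + \<delta>))"
      by (simp add: v_def algebra_simps)
    also have "\<dots> \<le> K"
      unfolding K_def using \<open>0 \<le> A\<close> \<open>0 \<le> B\<close>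
    proof (intro add_mono mult_left_mono)
      show "real n * h\<^sup>2 \<le> a\<^sup>2 * (2 / (1 - \<delta>'))\<^sup>2"
        unfolding h_def using \<open>1 \<le> x\<close> n \<delta> by (intro mult_sq_ln_div_le_of_le_powr) auto
      show "real n * x powr \<epsilon> * h powr (1 + \<delta>) \<le> a powr (1 + \<delta>) * ((1 + \<delta>) / \<epsilon>) powr (1 + \<delta>)"
        unfolding h_def \<epsilon>_def using \<open>1 \<le> x\<close> \<open>0 < a\<close> n \<delta>
        by (intro mult_powr_ln_div_le_of_le_powr) auto
    qed
    moreover have "h * x = a * ln x" using \<open>0 < x\<close> by (simp add: h_def)
    ultimately have "real n * v - h * x \<le> K - a * ln x" by linarith
    also have "\<dots> \<le> K - log 2 C * ln x" using \<open>1 \<le> x\<close> by (simp add: a_def distrib_right)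
    finally show ?thesis
      using \<open>1 \<le> x\<close> \<open>1 \<le> n\<close> \<open>0 \<le> h\<close> \<open>0 \<le> v\<close> mgf
      by (intro measure_sum_gt_le_const_mult_tail) auto
  qed
  then show ?thesis by blast
qed

lemma measure_sum_gt_le_n_tail_moment_2_plus:
  assumes mean: "integrable M (\<eta> 0)" "expectation (\<eta> 0) = 0"
    and neg: "integrable M (\<lambda>\<omega>. (\<eta> 0 \<omega>)\<^sup>2 * indicator {..0} (\<eta> 0 \<omega>))"
    and "0 < \<delta>"
    and pos: "integrable M (\<lambda>\<omega>. \<eta> 0 \<omega> powr (2 + \<delta>) * indicator {0<..} (\<eta> 0 \<omega>))"
  shows "\<exists>c > 0. \<forall>x > 0. \<forall>n::nat. 1 \<le> n \<and> real n \<le> x\<^sup>2 / (c * ln x) \<longrightarrow>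
    measure M {\<omega> \<in> space M. (\<Sum>i<n. \<eta> i \<omega>) > x} \<le> c * real n * tail M (\<eta> 0) x"
proof -
  have sq: "integrable M (\<lambda>\<omega>. (\<eta> 0 \<omega>)\<^sup>2)"
    using \<open>0 < \<delta>\<close> by (intro integrable_power2_of_moments[OF random_variable_eta neg pos]) auto
  define S where "S = expectation (\<lambda>\<omega>. (\<eta> 0 \<omega>)\<^sup>2)"
  define B where "B = expectation (\<lambda>\<omega>. \<eta> 0 \<omega> powr (2 + \<delta>) * indicator {0<..} (\<eta> 0 \<omega>))"
  have "0 \<le> S" "0 \<le> B" unfolding S_def B_def by (auto intro!: integral_nonneg_AE)
  define a where "a = 2 * (log 2 C + 1)"
  define \<epsilon> where "\<epsilon> = \<delta> / 2"
  have "0 < a" "0 < \<epsilon>" using one_le_C \<open>0 < \<delta>\<close> by (auto simp: a_def \<epsilon>_def add_nonneg_pos)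
  obtain m :: nat where m: "a / \<epsilon> < 2 ^ m" using real_arch_pow[of 2 "a / \<epsilon>"] by auto
  define K where "K = B * (a powr (2 + \<delta>) * ((1 + \<delta>) / \<epsilon>) powr (1 + \<delta>))"
  define c where "c = max (max (C ^ m + exp K * C / tail M (\<eta> 0) 1) (2 * a * S)) 1"
  have c: "1 \<le> c" "2 * a * S \<le> c" "C ^ m + exp K * C / tail M (\<eta> 0) 1 \<le> c"
    by (auto simp: c_def)
  have "measure M {\<omega> \<in> space M. x < (\<Sum>i<n. \<eta> i \<omega>)} \<le> c * real n * tail M (\<eta> 0) x"
    if "0 < x" "1 \<le> n" and n: "real n \<le> x\<^sup>2 / (c * ln x)" for x n
  proof -
    have "1 < x"
    proof (rule ccontr)
      assume "\<not> 1 < x"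
      then have "x\<^sup>2 / (c * ln x) \<le> 0"
        using \<open>0 < x\<close> c by (intro divide_nonneg_nonpos) (auto simp: mult_nonneg_nonpos)
      then show False using that by linarith
    qed
    define h where "h = a * ln x / x"
    define v where "v = h\<^sup>2 * S + x powr \<epsilon> * h powr (2 + \<delta>) * B"
    have "0 \<le> h" "0 \<le> v"
      using \<open>1 < x\<close> \<open>0 < a\<close> \<open>0 \<le> S\<close> \<open>0 \<le> B\<close> by (simp_all add: h_def v_def)
    have "h * (x / 2 ^ m) = a / 2 ^ m * ln x" using \<open>0 < x\<close> by (simp add: h_def)
    also have "\<dots> \<le> \<epsilon> * ln x"
      using m \<open>1 < x\<close> \<open>0 < \<epsilon>\<close> by (intro mult_right_mono) (auto simp: field_simps)
    finally have "exp (h * (x / 2 ^ m)) \<le> x powr \<epsilon>"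
      using \<open>0 < x\<close> by (simp add: powr_def mult.commute)
    have "expectation (\<lambda>\<omega>. exp (h * min (\<eta> 0 \<omega>) (x / 2 ^ m)))
        \<le> 1 + h\<^sup>2 * S + exp (h * (x / 2 ^ m)) * h powr (2 + \<delta>) * B"
      unfolding S_def B_def using \<open>0 < x\<close> \<open>0 < \<delta>\<close>
      by (intro expectation_exp_mult_min_le_sq_pos_powr[OF mean(1) eq_refl[OF mean(2)] sq pos
            \<open>0 \<le> h\<close>]) auto
    also have "\<dots> \<le> 1 + v"
      using \<open>exp (h * (x / 2 ^ m)) \<le> x powr \<epsilon>\<close> \<open>0 \<le> B\<close> by (simp add: v_def mult_right_mono)
    finally have mgf: "expectation (\<lambda>\<omega>. exp (h * min (\<eta> 0 \<omega>) (x / 2 ^ m))) \<le> 1 + v" .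
    have "real n * h\<^sup>2 * S \<le> a\<^sup>2 * ln x / c * S"
      unfolding h_def using \<open>1 < x\<close> n c \<open>0 \<le> S\<close>
      by (intro mult_right_mono mult_sq_ln_div_le_of_le_sq_div_ln) auto
    also have "\<dots> \<le> a / 2 * ln x"
      using c \<open>0 < a\<close> \<open>1 < x\<close> by (simp add: field_simps power2_eq_square mult_right_mono)
    finally have "real n * h\<^sup>2 * S \<le> a / 2 * ln x" .
    moreover have
      "real n * x powr \<epsilon> * h powr (2 + \<delta>) \<le> a powr (2 + \<delta>) * ((1 + \<delta>) / \<epsilon>) powr (1 + \<delta>)"
      unfolding h_def \<epsilon>_def using \<open>1 < x\<close> \<open>0 < a\<close> n c \<open>0 < \<delta>\<close>
      by (intro mult_powr_ln_div_le_of_le_sq_div_ln) auto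
    ultimately have "real n * v \<le> a / 2 * ln x + K"
      unfolding K_def using \<open>0 \<le> B\<close>
      by (simp add: v_def distrib_left add_mono mult_left_mono ac_simps)
    moreover have "h * x = a * ln x" using \<open>0 < x\<close> by (simp add: h_def)
    ultimately have "real n * v - h * x \<le> K - a / 2 * ln x" by linarith
    also have "\<dots> \<le> K - log 2 C * ln x" using \<open>1 < x\<close> by (simp add: a_def distrib_right)
    finally have "measure M {\<omega> \<in> space M. x < (\<Sum>i<n. \<eta> i \<omega>)}
        \<le> (C ^ m + exp K * C / tail M (\<eta> 0) 1) * real n * tail M (\<eta> 0) x"
      using \<open>1 < x\<close> \<open>1 \<le> n\<close> \<open>0 \<le> h\<close> \<open>0 \<le> v\<close> mgf
      by (intro measure_sum_gt_le_const_mult_tail) auto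
    also have "\<dots> \<le> c * real n * tail M (\<eta> 0) x"
      using c by (intro mult_right_mono) (auto simp: tail_nonneg)
    finally show ?thesis .
  qed
  then show ?thesis using c by (intro exI[of _ c]) auto
qed

end

theorem proposition2:
  fixes M :: "'a measure" and \<eta> :: "nat \<Rightarrow> 'a \<Rightarrow> real"
  assumes "prob_space M"
    and rv: "\<And>i. \<eta> i \<in> borel_measurable M"
    and indep: "prob_space.indep_vars M (\<lambda>_. borel) \<eta> UNIV"
    and ident: "\<And>i. distr M borel (\<eta> i) = distr M borel (\<eta> 0)"
    and int: "integrable M (\<eta> 0)"
    and mean0: "prob_space.expectation M (\<eta> 0) = 0"
    and neg2: "integrable M (\<lambda>\<omega>. (\<eta> 0 \<omega>)\<^sup>2 * indicator {..0} (\<eta> 0 \<omega>))"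
    and domvar: "\<exists>C. \<forall>x. tail M (\<eta> 0) (x / 2) \<le> C * tail M (\<eta> 0) x"
  shows
    "(\<forall>\<delta>. 0 < \<delta> \<and> \<delta> < 1 \<and>
        integrable M (\<lambda>\<omega>. (\<eta> 0 \<omega>) powr (1 + \<delta>) * indicator {0<..} (\<eta> 0 \<omega>)) \<longrightarrow>
        (\<forall>\<delta>'. 0 < \<delta>' \<and> \<delta>' < \<delta> \<longrightarrow>
          (\<exists>c. \<forall>x > 0. \<forall>n::nat. 1 \<le> n \<and> real n \<le> x powr (1 + \<delta>') \<longrightarrow>
             measure M {\<omega> \<in> space M. (\<Sum>i<n. \<eta> i \<omega>) > x} \<le> c * real n * tail M (\<eta> 0) x)))
   \<and>
     (\<forall>\<delta>. 0 < \<delta> \<and>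
        integrable M (\<lambda>\<omega>. (\<eta> 0 \<omega>) powr (2 + \<delta>) * indicator {0<..} (\<eta> 0 \<omega>)) \<longrightarrow>
        (\<exists>c > 0. \<forall>x > 0. \<forall>n::nat. 1 \<le> n \<and> real n \<le> x\<^sup>2 / (c * ln x) \<longrightarrow>
             measure M {\<omega> \<in> space M. (\<Sum>i<n. \<eta> i \<omega>) > x} \<le> c * real n * tail M (\<eta> 0) x))"
proof -
  interpret iid_sequence M \<eta>
    using assms(1) rv indep ident by (simp add: iid_sequence_def iid_sequence_axioms_def)
  obtain C0 where C0: "\<And>x. tail M (\<eta> 0) (x / 2) \<le> C0 * tail M (\<eta> 0) x" using domvar by blast
  have "tail M (\<eta> 0) (x / 2) \<le> max 1 C0 * tail M (\<eta> 0) x" for x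
    using C0[of x] tail_nonneg[of "\<eta> 0" x] by (meson max.cobounded2 mult_right_mono order_trans)
  then interpret dominated_varying_iid M \<eta> "max 1 C0"
    by unfold_locales auto
  show ?thesis
    using measure_sum_gt_le_n_tail_moment_1_plus[OF int mean0 neg2]
      measure_sum_gt_le_n_tail_moment_2_plus[OF int mean0 neg2]
    by blast
qed

end
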